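(* Let $H:\mathbb{R}^{2d}\to\mathbb{R}$ be continuous with $H(q,-p)=H(q,p)$ and $\int e^{-H}=1$. For $0<h<h_0$ let $\Psi_h$ be a continuous, Lebesgue-measure-preserving bijection of $\mathbb{R}^{2d}$ reversible with respect to $S(q,p)=(q,-p)$, and let $\Delta(x;h)=H(\Psi_h(x))-H(x)$. Define $\mu(h)=\int\Delta(x;h)e^{-H(x)}dx$, $s^2(h)=\int\Delta(x;h)^2e^{-H(x)}dx$, $\sigma^2(h)=s^2(h)-\mu(h)^2$. Let $\nu$ be a positive integer and assume: (i) there are functions $a(x)$ and $r(x;h)$ with $\Delta(x;h)=h^\nu a(x)+h^\nu r(x;h)$ and $\lim_{h\to0}r(x;h)=0$ for each $x$; (ii) there is a function $D\ge0$ with $\int De^{-H}<\infty$ and $\sup_{0<h<h_0}\Delta(x;h)^2/h^{2\nu}\le D(x)$ for all $x$. Then $$\lim_{h\to0}\frac{\mu(h)}{h^{2\nu}}=\frac\Sigma2,\qquad\lim_{h\to0}\frac{\sigma^2(h)}{h^{2\nu}}=\Sigma,\qquad \Sigma=\int_{\mathbb{R}^{2d}}a(x)^2e^{-H(x)}dx.$$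
   Context: In the application, $\Psi_h$ is the map advancing Hamilton's equations for $H$ over a fixed time interval $[0,\lambda]$ ($\lambda/h$ an integer) with a reversible volume-preserving integrator of order $\nu$. *)

theory Defs
  imports "HOL-Analysis.Analysis"
begin

definition flipS :: "((real^'d) \<times> (real^'d)) \<Rightarrow> ((real^'d) \<times> (real^'d))" where
  "flipS x = (fst x, - snd x)"

definition leb_measure_preserving :: "('a::euclidean_space \<Rightarrow> 'a) \<Rightarrow> bool" where
  "leb_measure_preserving f \<longleftrightarrow> f \<in> borel_measurable lborel \<and> distr lborel lborel f = lborel"

end

theory Submission
  imports Defs
begin

text \<open>Since \<open>\<Psi>\<^sub>h\<close> is reversible and volume preserving, \<open>x \<mapsto> S (\<Psi>\<^sub>h x)\<close> preserves
  Lebesgue measure, reverses the sign of \<open>\<Delta>\<close> and multiplies \<open>exp (- H)\<close> by \<open>exp (- \<Delta>)\<close>.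
  Substituting it on \<open>{\<Delta> < 0}\<close> folds the moments onto \<open>{\<Delta> > 0}\<close>: with \<open>p = max 0 \<Delta>\<close>,
  \<open>\<mu> = \<integral> p (1 - exp (- p)) exp (- H)\<close> and \<open>s\<^sup>2 = \<integral> p\<^sup>2 (1 + exp (- p)) exp (- H)\<close>.
  After division by \<open>h\<^sup>2\<^sup>\<nu>\<close>, dominated convergence (with bound \<open>D exp (- H)\<close>) and
  \<open>p (1 - exp (- p)) = p\<^sup>2 + O(p\<^sup>3)\<close> give \<open>\<mu> / h\<^sup>2\<^sup>\<nu> \<rightarrow> A\<close> and \<open>s\<^sup>2 / h\<^sup>2\<^sup>\<nu> \<rightarrow> 2 A\<close>
  with \<open>A = \<integral> (max 0 a)\<^sup>2 exp (- H)\<close>. Without folding, \<open>s\<^sup>2 / h\<^sup>2\<^sup>\<nu> \<rightarrow> \<Sigma>\<close> directly,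
  hence \<open>A = \<Sigma> / 2\<close>; and \<open>\<mu>\<^sup>2 = O(h\<^sup>4\<^sup>\<nu>)\<close> gives the variance.\<close>

lemma distr_lborel_uminus: "distr lborel lborel (uminus :: 'a::euclidean_space \<Rightarrow> 'a) = lborel"
proof -
  have "lborel = distr lborel borel (uminus :: 'a \<Rightarrow> 'a)"
    using lborel_affine[of "-1" "0::'a"] by (simp add: density_1)
  also have "\<dots> = distr lborel lborel (uminus :: 'a \<Rightarrow> 'a)"
    by (rule distr_cong) auto
  finally show ?thesis ..
qed

lemma distr_lborel_flipS: "distr lborel lborel flipS = lborel"
proof -
  have flipS_split: "flipS = (\<lambda>(q::real^'d, p::real^'d). (q, - p))"
    by (auto simp: flipS_def fun_eq_iff)
  have "distr lborel lborel flipS =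
      distr (lborel \<Otimes>\<^sub>M lborel) (lborel \<Otimes>\<^sub>M lborel) (\<lambda>(q::real^'d, p::real^'d). (q, - p))"
    by (simp add: lborel_prod flipS_split)
  also have "\<dots> = distr lborel lborel (\<lambda>q. q) \<Otimes>\<^sub>M distr lborel lborel uminus"
    by (rule pair_measure_distr[symmetric])
      (auto simp: distr_lborel_uminus lborel.sigma_finite_measure_axioms)
  also have "\<dots> = lborel"
    by (simp add: distr_lborel_uminus lborel_prod)
  finally show ?thesis .
qed

lemma continuous_on_flipS: "continuous_on UNIV flipS"
  unfolding flipS_def by (intro continuous_intros)

lemma flipS_flipS [simp]: "flipS (flipS x) = x"
  by (simp add: flipS_def)

lemma distr_lborel_flipS_comp:
  fixes \<Psi> :: "(real^'d) \<times> (real^'d) \<Rightarrow> (real^'d) \<times> (real^'d)"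
  assumes "leb_measure_preserving \<Psi>"
  shows "distr lborel lborel (flipS \<circ> \<Psi>) = lborel"
proof -
  have "\<Psi> \<in> borel_measurable borel" and \<Psi>_distr: "distr lborel lborel \<Psi> = lborel"
    using assms by (auto simp: leb_measure_preserving_def)
  then have "distr lborel lborel (flipS \<circ> \<Psi>) = distr (distr lborel lborel \<Psi>) lborel flipS"
    using borel_measurable_continuous_onI[OF continuous_on_flipS]
    by (intro distr_distr[symmetric]) auto
  then show ?thesis
    by (simp add: \<Psi>_distr distr_lborel_flipS)
qed

lemma flipS_invariant:
  fixes H :: "(real^'d) \<times> (real^'d) \<Rightarrow> 'b"
  assumes "\<And>q p. H (q, - p) = H (q, p)"
  shows "H (flipS z) = H z"
  by (cases z) (simp add: flipS_def assms)

lemma energy_error_flipS_comp: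
  fixes \<Psi> :: "(real^'d) \<times> (real^'d) \<Rightarrow> (real^'d) \<times> (real^'d)"
    and H :: "(real^'d) \<times> (real^'d) \<Rightarrow> real"
  assumes "bij \<Psi>" and rev: "inv \<Psi> = flipS \<circ> \<Psi> \<circ> flipS" and H_sym: "\<And>q p. H (q, - p) = H (q, p)"
  shows "H (\<Psi> (flipS (\<Psi> x))) - H (flipS (\<Psi> x)) = - (H (\<Psi> x) - H x)"
proof -
  have "\<Psi> (inv \<Psi> (flipS x)) = flipS x"
    using \<open>bij \<Psi>\<close> by (simp add: bij_def surj_f_inv_f)
  then have "\<Psi> (flipS (\<Psi> x)) = flipS x"
    by (simp add: rev)
  then show ?thesis
    by (simp add: flipS_invariant[OF H_sym])
qed

lemma integral_dominated_convergence_at_right: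
  fixes s :: "real \<Rightarrow> 'a \<Rightarrow> real"
  assumes h0: "0 < h0" and g: "integrable M g"
    and s_meas: "\<And>h. 0 < h \<Longrightarrow> h < h0 \<Longrightarrow> s h \<in> borel_measurable M"
    and lim: "\<And>x. x \<in> space M \<Longrightarrow> ((\<lambda>h. s h x) \<longlongrightarrow> f x) (at_right 0)"
    and bound: "\<And>h x. 0 < h \<Longrightarrow> h < h0 \<Longrightarrow> x \<in> space M \<Longrightarrow> \<bar>s h x\<bar> \<le> g x"
  shows "((\<lambda>h. integral\<^sup>L M (s h)) \<longlongrightarrow> integral\<^sup>L M f) (at_right 0)"
proof (rule tendsto_at_right_sequentially[OF h0])
  fix S :: "nat \<Rightarrow> real"
  assume S: "\<And>n. 0 < S n" "\<And>n. S n < h0" "decseq S" "S \<longlonglongrightarrow> 0"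
  then have "filterlim S (at_right 0) sequentially"
    by (intro tendsto_imp_filterlim_at_right) auto
  then have S_lim: "(\<lambda>n. s (S n) x) \<longlonglongrightarrow> f x" if "x \<in> space M" for x
    using lim[OF that] by (rule filterlim_compose[rotated])
  have S_meas: "s (S n) \<in> borel_measurable M" for n
    using s_meas S by blast
  have "f \<in> borel_measurable M"
    using S_lim S_meas by (rule borel_measurable_LIMSEQ_real)
  then show "(\<lambda>n. integral\<^sup>L M (s (S n))) \<longlonglongrightarrow> integral\<^sup>L M f"
  proof (rule integral_dominated_convergence[where w=g])
    show "AE x in M. (\<lambda>n. s (S n) x) \<longlonglongrightarrow> f x"
      using S_lim by (rule AE_I2)
    show "AE x in M. norm (s (S n) x) \<le> g x" for n
      using bound S by (intro AE_I2) simp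
  qed (use S_meas g in auto)
qed

lemma measure_preserving_integral:
  fixes f :: "'a \<Rightarrow> real"
  assumes "T \<in> M \<rightarrow>\<^sub>M M" "distr M M T = M" "f \<in> borel_measurable M"
  shows "integrable M (\<lambda>x. f (T x)) \<longleftrightarrow> integrable M f"
    and "integral\<^sup>L M (\<lambda>x. f (T x)) = integral\<^sup>L M f"
  using integrable_distr_eq[OF assms(1,3)] integral_distr[OF assms(1,3)] by (simp_all add: assms(2))

text \<open>Detailed balance: substituting \<open>x \<mapsto> T x\<close> on \<open>{d < 0}\<close> moves that part
  of the integral onto \<open>{d > 0}\<close>, with the extra weight \<open>exp (- d)\<close>.\<close>
lemma integral_fold_reversible:
  fixes T :: "'a \<Rightarrow> 'a" and d w :: "'a \<Rightarrow> real" and G :: "real \<Rightarrow> real"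
  assumes T_meas: "T \<in> M \<rightarrow>\<^sub>M M" and T_distr: "distr M M T = M"
    and [measurable]: "d \<in> borel_measurable M" "w \<in> borel_measurable M" "G \<in> borel_measurable borel"
    and d_T: "\<And>x. x \<in> space M \<Longrightarrow> d (T x) = - d x"
    and w_T: "\<And>x. x \<in> space M \<Longrightarrow> w (T x) = exp (- d x) * w x"
    and G0: "G 0 = 0"
    and int: "integrable M (\<lambda>x. G (d x) * w x)"
  shows "integral\<^sup>L M (\<lambda>x. G (d x) * w x) =
    integral\<^sup>L M (\<lambda>x. (G (max 0 (d x)) + G (- max 0 (d x)) * exp (- max 0 (d x))) * w x)"
proof -
  define Gpos where "Gpos = (\<lambda>t. if 0 < t then G t else 0)"
  define Gneg where "Gneg = (\<lambda>t. if t < 0 then G t else 0)"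
  have [measurable]: "Gpos \<in> borel_measurable borel" "Gneg \<in> borel_measurable borel"
    unfolding Gpos_def Gneg_def by measurable
  have int_pos: "integrable M (\<lambda>x. Gpos (d x) * w x)"
    by (rule Bochner_Integration.integrable_bound[OF int]) (auto simp: Gpos_def abs_mult)
  have int_neg: "integrable M (\<lambda>x. Gneg (d x) * w x)"
    by (rule Bochner_Integration.integrable_bound[OF int]) (auto simp: Gneg_def abs_mult)
  have neg_T: "Gneg (d (T x)) * w (T x) = Gneg (- d x) * exp (- d x) * w x" if "x \<in> space M" for x
    using that by (simp add: d_T w_T)
  note preserving = measure_preserving_integral[OF T_meas T_distr, of "\<lambda>x. Gneg (d x) * w x"]
  have int_neg_T: "integrable M (\<lambda>x. Gneg (- d x) * exp (- d x) * w x)"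
    using preserving(1) int_neg by (simp add: neg_T cong: Bochner_Integration.integrable_cong)
  have neg_fold: "integral\<^sup>L M (\<lambda>x. Gneg (d x) * w x) =
      integral\<^sup>L M (\<lambda>x. Gneg (- d x) * exp (- d x) * w x)"
    using preserving(2) by (simp add: neg_T cong: Bochner_Integration.integral_cong)
  have "integral\<^sup>L M (\<lambda>x. G (d x) * w x) =
      integral\<^sup>L M (\<lambda>x. Gpos (d x) * w x + Gneg (d x) * w x)"
    by (intro Bochner_Integration.integral_cong) (auto simp: Gpos_def Gneg_def G0)
  also have "\<dots> = integral\<^sup>L M (\<lambda>x. Gpos (d x) * w x + Gneg (- d x) * exp (- d x) * w x)"
    using int_pos int_neg int_neg_T by (simp add: neg_fold)
  also have "\<dots> = integral\<^sup>L M (\<lambda>x. (G (max 0 (d x)) + G (- max 0 (d x)) * exp (- max 0 (d x))) * w x)"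
    by (intro Bochner_Integration.integral_cong) (auto simp: Gpos_def Gneg_def G0 max_def distrib_right)
  finally show ?thesis .
qed

lemma exp_minus_le_quadratic:
  fixes t :: real
  assumes "0 \<le> t"
  shows "exp (- t) \<le> 1 - t + t\<^sup>2"
proof -
  have "exp (- t) \<le> inverse (1 + t)"
    using exp_ge_add_one_self[of t] assms by (simp add: exp_minus le_imp_inverse_le)
  also have "\<dots> \<le> 1 - t + t\<^sup>2"
  proof -
    have "1 \<le> (1 + t) * (1 - t + t\<^sup>2)"
      using assms by (simp add: algebra_simps power2_eq_square power3_eq_cube)
    then show ?thesis
      using assms by (simp add: field_simps)
  qed
  finally show ?thesis .
qed

lemma mult_one_minus_exp_minus_bounds:
  fixes t :: real
  assumes "0 \<le> t"
  shows "t\<^sup>2 * (1 - t) \<le> t * (1 - exp (- t))" and "t * (1 - exp (- t)) \<le> t\<^sup>2"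
proof -
  show "t\<^sup>2 * (1 - t) \<le> t * (1 - exp (- t))"
    using mult_left_mono[OF exp_minus_le_quadratic[OF assms] assms]
    by (simp add: power2_eq_square algebra_simps)
  show "t * (1 - exp (- t)) \<le> t\<^sup>2"
    using mult_left_mono[OF exp_ge_add_one_self[of "- t"] assms]
    by (simp add: power2_eq_square algebra_simps)
qed

lemma abs_le_square_plus_one: "\<bar>t\<bar> \<le> t\<^sup>2 + 1" for t :: real
proof -
  have "0 \<le> (\<bar>t\<bar> - 1)\<^sup>2"
    by simp
  then show ?thesis
    by (simp add: power2_eq_square algebra_simps abs_mult_self_eq)
qed

lemma power2_divide_power: "(t / c ^ n)\<^sup>2 = t\<^sup>2 / c ^ (2 * n)" for t c :: real
  by (simp add: power_divide power_mult[symmetric] mult.commute)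

lemma tendsto_scaled_of_expansion:
  fixes f r :: "real \<Rightarrow> real"
  assumes "0 < h0" and "\<And>h. 0 < h \<Longrightarrow> h < h0 \<Longrightarrow> f h = h ^ n * c + h ^ n * r h"
    and "(r \<longlongrightarrow> 0) (at_right 0)"
  shows "((\<lambda>h. f h / h ^ n) \<longlongrightarrow> c) (at_right 0)"
proof -
  have "((\<lambda>h. c + r h) \<longlongrightarrow> c) (at_right 0)"
    using tendsto_add[OF tendsto_const assms(3)] by simp
  then show ?thesis
    by (rule Lim_transform_eventually)
      (use assms(1,2) in \<open>auto simp: eventually_at_right_field field_simps intro!: exI[of _ h0]\<close>)
qed

text \<open>In the application \<open>w = exp (- H)\<close> and \<open>T h = flipS \<circ> \<Psi> h\<close>.\<close>
locale reversible_energy_error =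
  fixes M :: "'a measure" and T :: "real \<Rightarrow> 'a \<Rightarrow> 'a" and w :: "'a \<Rightarrow> real"
    and \<Delta> :: "'a \<Rightarrow> real \<Rightarrow> real" and a D :: "'a \<Rightarrow> real" and h0 :: real and \<nu> :: nat
  assumes h0_pos: "0 < h0" and nu_pos: "0 < \<nu>"
    and w_nonneg: "\<And>x. 0 \<le> w x" and w_measurable [measurable]: "w \<in> borel_measurable M"
    and w_integrable: "integrable M w" and D_integrable: "integrable M (\<lambda>x. D x * w x)"
    and error_measurable: "\<And>h. 0 < h \<Longrightarrow> h < h0 \<Longrightarrow> (\<lambda>x. \<Delta> x h) \<in> borel_measurable M"
    and T_measurable: "\<And>h. 0 < h \<Longrightarrow> h < h0 \<Longrightarrow> T h \<in> M \<rightarrow>\<^sub>M M"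
    and T_distr: "\<And>h. 0 < h \<Longrightarrow> h < h0 \<Longrightarrow> distr M M (T h) = M"
    and error_T: "\<And>h x. 0 < h \<Longrightarrow> h < h0 \<Longrightarrow> x \<in> space M \<Longrightarrow> \<Delta> (T h x) h = - \<Delta> x h"
    and w_T: "\<And>h x. 0 < h \<Longrightarrow> h < h0 \<Longrightarrow> x \<in> space M \<Longrightarrow> w (T h x) = exp (- \<Delta> x h) * w x"
    and scaled_error_lim: "\<And>x. x \<in> space M \<Longrightarrow> ((\<lambda>h. \<Delta> x h / h ^ \<nu>) \<longlongrightarrow> a x) (at_right 0)"
    and scaled_error_bound:
      "\<And>h x. 0 < h \<Longrightarrow> h < h0 \<Longrightarrow> x \<in> space M \<Longrightarrow> (\<Delta> x h)\<^sup>2 / h ^ (2 * \<nu>) \<le> D x"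
begin

lemma eventually_step_size: "\<forall>\<^sub>F h in at_right 0. 0 < h \<and> h < h0"
  using h0_pos by (auto simp: eventually_at_right_field intro!: exI[of _ h0])

lemma error_sq_le:
  assumes "0 < h" "h < h0" "x \<in> space M"
  shows "(\<Delta> x h)\<^sup>2 \<le> h ^ (2 * \<nu>) * D x"
  using scaled_error_bound[OF assms] assms(1) by (simp add: pos_divide_le_eq mult.commute)

lemma integrable_error_sq:
  assumes "0 < h" "h < h0"
  shows "integrable M (\<lambda>x. (\<Delta> x h)\<^sup>2 * w x)"
proof (rule Bochner_Integration.integrable_bound)
  show "integrable M (\<lambda>x. h ^ (2 * \<nu>) * (D x * w x))"
    using D_integrable by simp
  show "(\<lambda>x. (\<Delta> x h)\<^sup>2 * w x) \<in> borel_measurable M"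
    using error_measurable[OF assms] by measurable
  have "(\<Delta> x h)\<^sup>2 * w x \<le> h ^ (2 * \<nu>) * (D x * w x)" if "x \<in> space M" for x
    using mult_right_mono[OF error_sq_le[OF assms that] w_nonneg] by (simp add: mult.assoc)
  then show "AE x in M. norm ((\<Delta> x h)\<^sup>2 * w x) \<le> norm (h ^ (2 * \<nu>) * (D x * w x))"
    using w_nonneg by (intro AE_I2) (auto intro: order_trans[OF _ abs_ge_self])
qed

lemma integrable_error:
  assumes "0 < h" "h < h0"
  shows "integrable M (\<lambda>x. \<Delta> x h * w x)"
proof (rule Bochner_Integration.integrable_bound)
  show "integrable M (\<lambda>x. (\<Delta> x h)\<^sup>2 * w x + w x)"
    using integrable_error_sq[OF assms] w_integrable by simp
  show "(\<lambda>x. \<Delta> x h * w x) \<in> borel_measurable M"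
    using error_measurable[OF assms] by measurable
  show "AE x in M. norm (\<Delta> x h * w x) \<le> norm ((\<Delta> x h)\<^sup>2 * w x + w x)"
    using mult_right_mono[OF abs_le_square_plus_one w_nonneg] w_nonneg
    by (intro AE_I2) (simp add: abs_mult distrib_right)
qed

lemma integral_fold:
  assumes "0 < h" "h < h0" and [measurable]: "G \<in> borel_measurable borel" and "G 0 = 0"
    and "integrable M (\<lambda>x. G (\<Delta> x h) * w x)"
  shows "integral\<^sup>L M (\<lambda>x. G (\<Delta> x h) * w x) =
    integral\<^sup>L M (\<lambda>x. (G (max 0 (\<Delta> x h)) + G (- max 0 (\<Delta> x h)) * exp (- max 0 (\<Delta> x h))) * w x)"
  using assms error_measurable[OF assms(1,2)] error_T[OF assms(1,2)] w_T[OF assms(1,2)]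
  by (intro integral_fold_reversible[OF T_measurable T_distr]) auto

lemma error_tendsto_zero:
  assumes "x \<in> space M"
  shows "((\<lambda>h. \<Delta> x h) \<longlongrightarrow> 0) (at_right 0)"
proof -
  have "((\<lambda>h. h ^ \<nu> * (\<Delta> x h / h ^ \<nu>)) \<longlongrightarrow> 0 ^ \<nu> * a x) (at_right 0)"
    by (intro tendsto_intros scaled_error_lim[OF assms])
  then have "((\<lambda>h. h ^ \<nu> * (\<Delta> x h / h ^ \<nu>)) \<longlongrightarrow> 0) (at_right 0)"
    unfolding zero_power[OF nu_pos] mult_zero_left .
  then show ?thesis
    by (rule Lim_transform_eventually) (use eventually_step_size in \<open>eventually_elim, simp\<close>)
qed

lemma pos_scaled_error_lim:
  assumes "x \<in> space M"
  shows "((\<lambda>h. max 0 (\<Delta> x h) / h ^ \<nu>) \<longlongrightarrow> max 0 (a x)) (at_right 0)"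
proof -
  have "((\<lambda>h. max 0 (\<Delta> x h / h ^ \<nu>)) \<longlongrightarrow> max 0 (a x)) (at_right 0)"
    by (intro tendsto_intros scaled_error_lim[OF assms])
  then show ?thesis
    by (rule Lim_transform_eventually)
      (use eventually_step_size in \<open>eventually_elim, simp add: max_divide_distrib_right\<close>)
qed

lemma pos_scaled_error_sq_bound:
  assumes "0 < h" "h < h0" "x \<in> space M"
  shows "(max 0 (\<Delta> x h) / h ^ \<nu>)\<^sup>2 \<le> D x"
proof -
  have "(max 0 (\<Delta> x h))\<^sup>2 \<le> (\<Delta> x h)\<^sup>2"
    by (simp add: max_def)
  then have "(max 0 (\<Delta> x h))\<^sup>2 / h ^ (2 * \<nu>) \<le> (\<Delta> x h)\<^sup>2 / h ^ (2 * \<nu>)"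
    using assms by (intro divide_right_mono) auto
  then show ?thesis
    using scaled_error_bound[OF assms] by (simp add: power2_divide_power)
qed

lemma scaled_second_moment_fold:
  assumes "0 < h" "h < h0"
  shows "integral\<^sup>L M (\<lambda>x. (\<Delta> x h)\<^sup>2 * w x) / h ^ (2 * \<nu>) =
    integral\<^sup>L M (\<lambda>x. (max 0 (\<Delta> x h) / h ^ \<nu>)\<^sup>2 * (1 + exp (- max 0 (\<Delta> x h))) * w x)"
proof -
  let ?p = "\<lambda>x. max 0 (\<Delta> x h)"
  have "integral\<^sup>L M (\<lambda>x. (\<Delta> x h)\<^sup>2 * w x) =
      integral\<^sup>L M (\<lambda>x. ((?p x)\<^sup>2 + (- ?p x)\<^sup>2 * exp (- ?p x)) * w x)"
    by (rule integral_fold[where G="\<lambda>t. t\<^sup>2", OF assms _ _ integrable_error_sq[OF assms]]) simp_all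
  moreover have "integral\<^sup>L M (\<lambda>x. (?p x / h ^ \<nu>)\<^sup>2 * (1 + exp (- ?p x)) * w x) =
      integral\<^sup>L M (\<lambda>x. ((?p x)\<^sup>2 + (- ?p x)\<^sup>2 * exp (- ?p x)) * w x / h ^ (2 * \<nu>))"
    by (intro Bochner_Integration.integral_cong refl)
      (simp add: power2_divide_power algebra_simps add_divide_distrib)
  ultimately show ?thesis
    by simp
qed

lemma scaled_mean_fold:
  assumes "0 < h" "h < h0"
  shows "integral\<^sup>L M (\<lambda>x. \<Delta> x h * w x) / h ^ (2 * \<nu>) =
    integral\<^sup>L M (\<lambda>x. max 0 (\<Delta> x h) * (1 - exp (- max 0 (\<Delta> x h))) / h ^ (2 * \<nu>) * w x)"
proof -
  let ?p = "\<lambda>x. max 0 (\<Delta> x h)"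
  have "integral\<^sup>L M (\<lambda>x. \<Delta> x h * w x) = integral\<^sup>L M (\<lambda>x. (?p x + - ?p x * exp (- ?p x)) * w x)"
    by (rule integral_fold[where G="\<lambda>t. t", OF assms _ _ integrable_error[OF assms]]) simp_all
  moreover have "integral\<^sup>L M (\<lambda>x. ?p x * (1 - exp (- ?p x)) / h ^ (2 * \<nu>) * w x) =
      integral\<^sup>L M (\<lambda>x. (?p x + - ?p x * exp (- ?p x)) * w x) / h ^ (2 * \<nu>)"
    by (simp add: algebra_simps flip: integral_divide_zero)
  ultimately show ?thesis
    by (simp only:)
qed

lemma second_moment_limit:
  "((\<lambda>h. integral\<^sup>L M (\<lambda>x. (\<Delta> x h)\<^sup>2 * w x) / h ^ (2 * \<nu>)) \<longlongrightarrow>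
    integral\<^sup>L M (\<lambda>x. (a x)\<^sup>2 * w x)) (at_right 0)"
proof -
  have "((\<lambda>h. integral\<^sup>L M (\<lambda>x. (\<Delta> x h / h ^ \<nu>)\<^sup>2 * w x)) \<longlongrightarrow>
      integral\<^sup>L M (\<lambda>x. (a x)\<^sup>2 * w x)) (at_right 0)"
  proof (rule integral_dominated_convergence_at_right[OF h0_pos D_integrable])
    show "(\<lambda>x. (\<Delta> x h / h ^ \<nu>)\<^sup>2 * w x) \<in> borel_measurable M" if "0 < h" "h < h0" for h
      using error_measurable[OF that] by measurable
    show "((\<lambda>h. (\<Delta> x h / h ^ \<nu>)\<^sup>2 * w x) \<longlongrightarrow> (a x)\<^sup>2 * w x) (at_right 0)" if "x \<in> space M" for x
      by (intro tendsto_intros scaled_error_lim[OF that])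
    show "\<bar>(\<Delta> x h / h ^ \<nu>)\<^sup>2 * w x\<bar> \<le> D x * w x" if "0 < h" "h < h0" "x \<in> space M" for h x
      using mult_right_mono[OF scaled_error_bound[OF that] w_nonneg] w_nonneg[of x]
      by (simp add: abs_mult power2_divide_power)
  qed
  then show ?thesis
    by (simp add: power2_divide_power times_divide_eq_left)
qed

lemma folded_second_moment_limit:
  "((\<lambda>h. integral\<^sup>L M (\<lambda>x. (\<Delta> x h)\<^sup>2 * w x) / h ^ (2 * \<nu>)) \<longlongrightarrow>
    2 * integral\<^sup>L M (\<lambda>x. (max 0 (a x))\<^sup>2 * w x)) (at_right 0)"
proof -
  have "((\<lambda>h. integral\<^sup>L M (\<lambda>x. (max 0 (\<Delta> x h) / h ^ \<nu>)\<^sup>2 * (1 + exp (- max 0 (\<Delta> x h))) * w x))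
      \<longlongrightarrow> integral\<^sup>L M (\<lambda>x. 2 * ((max 0 (a x))\<^sup>2 * w x))) (at_right 0)"
  proof (rule integral_dominated_convergence_at_right[OF h0_pos integrable_mult_right[OF D_integrable]])
    show "(\<lambda>x. (max 0 (\<Delta> x h) / h ^ \<nu>)\<^sup>2 * (1 + exp (- max 0 (\<Delta> x h))) * w x) \<in> borel_measurable M"
      if "0 < h" "h < h0" for h
      using error_measurable[OF that] by measurable
    show "((\<lambda>h. (max 0 (\<Delta> x h) / h ^ \<nu>)\<^sup>2 * (1 + exp (- max 0 (\<Delta> x h))) * w x) \<longlongrightarrow>
        2 * ((max 0 (a x))\<^sup>2 * w x)) (at_right 0)" if "x \<in> space M" for x
    proof -
      have "((\<lambda>h. (max 0 (\<Delta> x h) / h ^ \<nu>)\<^sup>2 * (1 + exp (- max 0 (\<Delta> x h))) * w x) \<longlongrightarrow>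
          (max 0 (a x))\<^sup>2 * (1 + exp (- max 0 0)) * w x) (at_right 0)"
        by (intro tendsto_intros pos_scaled_error_lim[OF that] error_tendsto_zero[OF that])
      then show ?thesis
        by (simp add: mult_ac)
    qed
    show "\<bar>(max 0 (\<Delta> x h) / h ^ \<nu>)\<^sup>2 * (1 + exp (- max 0 (\<Delta> x h))) * w x\<bar> \<le> 2 * (D x * w x)"
      if "0 < h" "h < h0" "x \<in> space M" for h x
    proof -
      have "(max 0 (\<Delta> x h) / h ^ \<nu>)\<^sup>2 * (1 + exp (- max 0 (\<Delta> x h))) \<le> D x * 2"
        using pos_scaled_error_sq_bound[OF that] order_trans[OF zero_le_power2 pos_scaled_error_sq_bound[OF that]]
        by (intro mult_mono) (auto simp: max_def)
      from mult_right_mono[OF this w_nonneg] show ?thesis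
        using w_nonneg[of x] by (simp add: abs_mult mult_ac)
    qed
  qed
  then show ?thesis
    unfolding integral_mult_right_zero
    by (elim Lim_transform_eventually)
      (use eventually_step_size in \<open>eventually_elim, simp add: scaled_second_moment_fold\<close>)
qed

lemma folded_mean_limit:
  "((\<lambda>h. integral\<^sup>L M (\<lambda>x. \<Delta> x h * w x) / h ^ (2 * \<nu>)) \<longlongrightarrow>
    integral\<^sup>L M (\<lambda>x. (max 0 (a x))\<^sup>2 * w x)) (at_right 0)"
proof -
  define F where
    "F = (\<lambda>h x. max 0 (\<Delta> x h) * (1 - exp (- max 0 (\<Delta> x h))) / h ^ (2 * \<nu>))"
  have F_lower: "(max 0 (\<Delta> x h) / h ^ \<nu>)\<^sup>2 * (1 - max 0 (\<Delta> x h)) \<le> F h x"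
    and F_upper: "F h x \<le> (max 0 (\<Delta> x h) / h ^ \<nu>)\<^sup>2" if "0 < h" for h x
    using that mult_one_minus_exp_minus_bounds[of "max 0 (\<Delta> x h)"]
    by (auto simp: F_def power2_divide_power intro!: divide_right_mono)
  have F_nonneg: "0 \<le> F h x" if "0 < h" for h x
    using that by (auto simp: F_def intro!: divide_nonneg_pos mult_nonneg_nonneg)
  have "((\<lambda>h. integral\<^sup>L M (\<lambda>x. F h x * w x)) \<longlongrightarrow> integral\<^sup>L M (\<lambda>x. (max 0 (a x))\<^sup>2 * w x))
      (at_right 0)"
  proof (rule integral_dominated_convergence_at_right[OF h0_pos D_integrable])
    show "(\<lambda>x. F h x * w x) \<in> borel_measurable M" if "0 < h" "h < h0" for h
      using error_measurable[OF that] unfolding F_def by measurable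
    show "((\<lambda>h. F h x * w x) \<longlongrightarrow> (max 0 (a x))\<^sup>2 * w x) (at_right 0)" if "x \<in> space M" for x
    proof (rule tendsto_mult_right, rule tendsto_sandwich)
      show "\<forall>\<^sub>F h in at_right 0. (max 0 (\<Delta> x h) / h ^ \<nu>)\<^sup>2 * (1 - max 0 (\<Delta> x h)) \<le> F h x"
        using eventually_at_right_less[of 0] by eventually_elim (rule F_lower)
      show "\<forall>\<^sub>F h in at_right 0. F h x \<le> (max 0 (\<Delta> x h) / h ^ \<nu>)\<^sup>2"
        using eventually_at_right_less[of 0] by eventually_elim (rule F_upper)
      have "((\<lambda>h. (max 0 (\<Delta> x h) / h ^ \<nu>)\<^sup>2 * (1 - max 0 (\<Delta> x h))) \<longlongrightarrow>
          (max 0 (a x))\<^sup>2 * (1 - max 0 0)) (at_right 0)"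
        by (intro tendsto_intros pos_scaled_error_lim[OF that] error_tendsto_zero[OF that])
      then show "((\<lambda>h. (max 0 (\<Delta> x h) / h ^ \<nu>)\<^sup>2 * (1 - max 0 (\<Delta> x h))) \<longlongrightarrow>
          (max 0 (a x))\<^sup>2) (at_right 0)"
        by simp
      show "((\<lambda>h. (max 0 (\<Delta> x h) / h ^ \<nu>)\<^sup>2) \<longlongrightarrow> (max 0 (a x))\<^sup>2) (at_right 0)"
        by (intro tendsto_intros pos_scaled_error_lim[OF that])
    qed
    show "\<bar>F h x * w x\<bar> \<le> D x * w x" if "0 < h" "h < h0" "x \<in> space M" for h x
      using mult_right_mono[OF order_trans[OF F_upper pos_scaled_error_sq_bound[OF that]] w_nonneg]
        F_nonneg[of h x] w_nonneg[of x] that(1)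
      by (simp add: abs_mult)
  qed
  then show ?thesis
    by (elim Lim_transform_eventually)
      (use eventually_step_size in \<open>eventually_elim, simp add: scaled_mean_fold F_def\<close>)
qed

lemma integral_sq_eq_twice_pos_part:
  "integral\<^sup>L M (\<lambda>x. (a x)\<^sup>2 * w x) = 2 * integral\<^sup>L M (\<lambda>x. (max 0 (a x))\<^sup>2 * w x)"
  using tendsto_unique[OF trivial_limit_at_right_real second_moment_limit folded_second_moment_limit] .

lemma mean_limit:
  "((\<lambda>h. integral\<^sup>L M (\<lambda>x. \<Delta> x h * w x) / h ^ (2 * \<nu>)) \<longlongrightarrow>
    integral\<^sup>L M (\<lambda>x. (a x)\<^sup>2 * w x) / 2) (at_right 0)"
  using folded_mean_limit by (simp add: integral_sq_eq_twice_pos_part)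

lemma variance_limit:
  "((\<lambda>h. (integral\<^sup>L M (\<lambda>x. (\<Delta> x h)\<^sup>2 * w x) - (integral\<^sup>L M (\<lambda>x. \<Delta> x h * w x))\<^sup>2) / h ^ (2 * \<nu>))
    \<longlongrightarrow> integral\<^sup>L M (\<lambda>x. (a x)\<^sup>2 * w x)) (at_right 0)"
proof -
  let ?\<mu> = "\<lambda>h. integral\<^sup>L M (\<lambda>x. \<Delta> x h * w x)"
  have "((\<lambda>h. integral\<^sup>L M (\<lambda>x. (\<Delta> x h)\<^sup>2 * w x) / h ^ (2 * \<nu>) - (?\<mu> h / h ^ (2 * \<nu>))\<^sup>2 * h ^ (2 * \<nu>))
      \<longlongrightarrow> integral\<^sup>L M (\<lambda>x. (a x)\<^sup>2 * w x) - (integral\<^sup>L M (\<lambda>x. (a x)\<^sup>2 * w x) / 2)\<^sup>2 * 0 ^ (2 * \<nu>))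
      (at_right 0)"
    by (intro tendsto_intros second_moment_limit mean_limit)
  then show ?thesis
    unfolding zero_power[OF mult_pos_pos[OF zero_less_numeral nu_pos]] mult_zero_right diff_zero
    by (elim Lim_transform_eventually)
      (use eventually_step_size in \<open>eventually_elim, simp add: power2_eq_square diff_divide_distrib\<close>)
qed

end

theorem theorem7p1:
  fixes H :: "((real^'d) \<times> (real^'d)) \<Rightarrow> real"
    and \<Psi> :: "real \<Rightarrow> ((real^'d) \<times> (real^'d)) \<Rightarrow> ((real^'d) \<times> (real^'d))"
    and a D :: "((real^'d) \<times> (real^'d)) \<Rightarrow> real"
    and r :: "((real^'d) \<times> (real^'d)) \<Rightarrow> real \<Rightarrow> real"
    and h0 :: real and \<nu> :: nat
  defines "\<Delta> \<equiv> (\<lambda>x h. H (\<Psi> h x) - H x)"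
  defines "\<mu> \<equiv> (\<lambda>h. integral\<^sup>L lborel (\<lambda>x. \<Delta> x h * exp (- H x)))"
  defines "s2 \<equiv> (\<lambda>h. integral\<^sup>L lborel (\<lambda>x. (\<Delta> x h)\<^sup>2 * exp (- H x)))"
  defines "\<sigma>2 \<equiv> (\<lambda>h. s2 h - (\<mu> h)\<^sup>2)"
  defines "\<Sigma> \<equiv> integral\<^sup>L lborel (\<lambda>x. (a x)\<^sup>2 * exp (- H x))"
  assumes H_cont: "continuous_on UNIV H"
    and H_sym: "\<And>q p. H (q, - p) = H (q, p)"
    and H_int: "integrable lborel (\<lambda>x. exp (- H x))"
    and H_norm: "integral\<^sup>L lborel (\<lambda>x. exp (- H x)) = 1"
    and h0_pos: "0 < h0"
    and Psi_cont: "\<And>h. 0 < h \<Longrightarrow> h < h0 \<Longrightarrow> continuous_on UNIV (\<Psi> h)"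
    and Psi_bij: "\<And>h. 0 < h \<Longrightarrow> h < h0 \<Longrightarrow> bij (\<Psi> h)"
    and Psi_vol: "\<And>h. 0 < h \<Longrightarrow> h < h0 \<Longrightarrow> leb_measure_preserving (\<Psi> h)"
    and Psi_rev: "\<And>h. 0 < h \<Longrightarrow> h < h0 \<Longrightarrow> inv (\<Psi> h) = flipS \<circ> \<Psi> h \<circ> flipS"
    and nu_pos: "0 < \<nu>"
    and expand: "\<And>x h. 0 < h \<Longrightarrow> h < h0 \<Longrightarrow> \<Delta> x h = h ^ \<nu> * a x + h ^ \<nu> * r x h"
    and r_lim: "\<And>x. ((\<lambda>h. r x h) \<longlongrightarrow> 0) (at_right 0)"
    and D_nonneg: "\<And>x. 0 \<le> D x"
    and D_int: "integrable lborel (\<lambda>x. D x * exp (- H x))"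
    and D_bound: "\<And>x h. 0 < h \<Longrightarrow> h < h0 \<Longrightarrow> (\<Delta> x h)\<^sup>2 / h ^ (2 * \<nu>) \<le> D x"
  shows "((\<lambda>h. \<mu> h / h ^ (2 * \<nu>)) \<longlongrightarrow> \<Sigma> / 2) (at_right 0) \<and>
         ((\<lambda>h. \<sigma>2 h / h ^ (2 * \<nu>)) \<longlongrightarrow> \<Sigma>) (at_right 0)"
proof -
  have [measurable]: "H \<in> borel_measurable borel"
    using H_cont by (rule borel_measurable_continuous_onI)
  have \<Psi>_meas [measurable]: "\<Psi> h \<in> borel_measurable borel" if "0 < h" "h < h0" for h
    using Psi_cont[OF that] by (rule borel_measurable_continuous_onI)
  interpret reversible_energy_error lborel "\<lambda>h. flipS \<circ> \<Psi> h" "\<lambda>x. exp (- H x)" \<Delta> a D h0 \<nu>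
  proof unfold_locales
    show "(\<lambda>x. \<Delta> x h) \<in> borel_measurable lborel" if "0 < h" "h < h0" for h
      using \<Psi>_meas[OF that] unfolding \<Delta>_def by measurable
    show "flipS \<circ> \<Psi> h \<in> lborel \<rightarrow>\<^sub>M lborel" if "0 < h" "h < h0" for h
      using measurable_comp[OF \<Psi>_meas[OF that] borel_measurable_continuous_onI[OF continuous_on_flipS]]
      by simp
    show "((\<lambda>h. \<Delta> x h / h ^ \<nu>) \<longlongrightarrow> a x) (at_right 0)" for x
      using h0_pos expand r_lim by (rule tendsto_scaled_of_expansion)
    show "\<Delta> ((flipS \<circ> \<Psi> h) x) h = - \<Delta> x h" if "0 < h" "h < h0" for h x
      using energy_error_flipS_comp[OF Psi_bij[OF that] Psi_rev[OF that] H_sym] by (simp add: \<Delta>_def)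
    show "exp (- H ((flipS \<circ> \<Psi> h) x)) = exp (- \<Delta> x h) * exp (- H x)" for h x
      by (simp add: \<Delta>_def flipS_invariant[OF H_sym] flip: exp_add)
  qed (use h0_pos nu_pos H_int D_int D_bound distr_lborel_flipS_comp[OF Psi_vol] in auto)
  show ?thesis
    using mean_limit variance_limit unfolding \<mu>_def s2_def \<sigma>2_def \<Sigma>_def by simp
qed

end
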